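(* Let $M$ be a binary matroid with set of bases $\mathcal{B}$, and let $\mathcal{B}_1\subseteq\mathcal{B}$ be the set of bases of some matroid $M_1$ (on the same ground set). If there is $X\in\mathcal{B}_1$ such that every vertex adjacent to $X$ in $G(M)$ lies in $\mathcal{B}_1$, then $\mathcal{B}_1=\mathcal{B}$.
   Context: A matroid is binary if it is representable over $\mathbb{F}_2$. The base graph $G(M)$ has the bases of $M$ as vertices, two bases being adjacent iff their symmetric difference has exactly two elements. *)

theory Defs
  imports Main "HOL.Modules" "HOL-Library.Z2" "HOL-Library.Function_Algebras"
begin

definition matroid_bases :: "'a set \<Rightarrow> 'a set set \<Rightarrow> bool" where
  "matroid_bases E \<B> \<longleftrightarrow> finite E \<and> \<B> \<noteq> {} \<and> (\<forall>B\<in>\<B>. B \<subseteq> E) \<and>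
     (\<forall>B1\<in>\<B>. \<forall>B2\<in>\<B>. \<forall>x\<in>B1 - B2. \<exists>y\<in>B2 - B1. insert y (B1 - {x}) \<in> \<B>)"

definition indep_of :: "'a set set \<Rightarrow> 'a set \<Rightarrow> bool" where
  "indep_of \<B> X \<longleftrightarrow> (\<exists>B\<in>\<B>. X \<subseteq> B)"

definition scale2 :: "bit \<Rightarrow> (nat \<Rightarrow> bit) \<Rightarrow> (nat \<Rightarrow> bit)" where
  "scale2 c v = (\<lambda>i. c * v i)"

text \<open>Binary = representable over GF(2): an element labelling by vectors such that
  a subset of E is independent iff its vectors are distinct and linearly independent.\<close>
definition binary_matroid :: "'a set \<Rightarrow> 'a set set \<Rightarrow> bool" where
  "binary_matroid E \<B> \<longleftrightarrow> matroid_bases E \<B> \<and>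
     (\<exists>f :: 'a \<Rightarrow> (nat \<Rightarrow> bit). \<forall>X. X \<subseteq> E \<longrightarrow>
        (indep_of \<B> X \<longleftrightarrow> inj_on f X \<and> \<not> module.dependent scale2 (f ` X)))"

definition base_adj :: "'a set set \<Rightarrow> 'a set \<Rightarrow> 'a set \<Rightarrow> bool" where
  "base_adj \<B> X Y \<longleftrightarrow> X \<in> \<B> \<and> Y \<in> \<B> \<and> card ((X - Y) \<union> (Y - X)) = 2"

end

theory Submission imports Defs "HOL.Vector_Spaces" begin

(* Write B - b + x for insert x (B - {b}).  Assume first that M is
   represented by f over GF(2).  Coordinates of f x with respect to the basis
   f ` B decide exchanges: B - b + x is a basis iff f x has a nonzero b-coordinate.
   Two consequences are used: (i) the dual exchange property -- for x in X - B
   some b in B - X gives a basis B - b + x; (ii) the binary obstruction -- if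
   |X - B| >= 2 then some B - b + x with x in X - B, b in B - X is not a basis
   (over GF(2) the sum of two vectors whose B - X coordinates are all 1 lies in
   the span of B \<inter> X, contradicting independence of f ` X).
   The theorem then follows by a purely combinatorial induction on |B - X|: a basis
   B with |B - X| >= 2 has two neighbours B - b + x and B - b' + x' closer to X, both in
   \<B>1 by induction, and the exchange axiom of M1 applied to them returns B. *)

section \<open>Elementary facts on matroid bases\<close>

lemma basis_finite: "matroid_bases E \<B> \<Longrightarrow> B \<in> \<B> \<Longrightarrow> finite B"
  unfolding matroid_bases_def by (meson finite_subset)

lemma basis_subset: "matroid_bases E \<B> \<Longrightarrow> B \<in> \<B> \<Longrightarrow> B \<subseteq> E"
  unfolding matroid_bases_def by blast

lemma basis_exchange:
  "matroid_bases E \<B> \<Longrightarrow> B1 \<in> \<B> \<Longrightarrow> B2 \<in> \<B> \<Longrightarrow> x \<in> B1 - B2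
    \<Longrightarrow> \<exists>y\<in>B2 - B1. insert y (B1 - {x}) \<in> \<B>"
  unfolding matroid_bases_def by blast

lemma bases_incomparable:
  assumes "matroid_bases E \<B>" "B1 \<in> \<B>" "B2 \<in> \<B>" "B1 \<subseteq> B2"
  shows "B1 = B2"
proof (rule ccontr)
  assume "B1 \<noteq> B2"
  then obtain x where "x \<in> B2 - B1" using assms(4) by blast
  then obtain y where "y \<in> B1 - B2" using basis_exchange[OF assms(1,3,2)] by blast
  then show False using assms(4) by blast
qed

lemma bases_card_diff:
  assumes mb: "matroid_bases E \<B>"
  shows "B1 \<in> \<B> \<Longrightarrow> B2 \<in> \<B> \<Longrightarrow> card (B1 - B2) = card (B2 - B1)"
proof (induction "card (B1 - B2)" arbitrary: B1)
  case 0
  then have "B1 \<subseteq> B2" using basis_finite[OF mb] by auto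
  then have "B1 = B2" using bases_incomparable[OF mb] 0 by blast
  then show ?case by simp
next
  case (Suc n)
  obtain x where x: "x \<in> B1 - B2" using Suc(2) by (metis card.empty ex_in_conv nat.distinct(1))
  obtain y where y: "y \<in> B2 - B1" and B1': "insert y (B1 - {x}) \<in> \<B>"
    using basis_exchange[OF mb Suc(3,4) x] by blast
  have fin: "finite B1" "finite B2" using basis_finite[OF mb] Suc(3,4) by auto
  have "insert y (B1 - {x}) - B2 = (B1 - B2) - {x}" using y by auto
  then have "card (insert y (B1 - {x}) - B2) = n" using Suc(2) x fin by simp
  with Suc(1)[OF _ B1' Suc(4)] have "card (B2 - insert y (B1 - {x})) = n" by simp
  moreover have "B2 - insert y (B1 - {x}) = (B2 - B1) - {y}" using x by auto
  moreover have "card (B2 - B1) = Suc (card ((B2 - B1) - {y}))"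
    using card_Suc_Diff1[of "B2 - B1" y] y fin by simp
  ultimately have "card (B2 - B1) = Suc n" by simp
  then show ?case using Suc(2) by simp
qed

lemma bases_card:
  assumes mb: "matroid_bases E \<B>" and "B1 \<in> \<B>" "B2 \<in> \<B>"
  shows "card B1 = card B2"
proof -
  have "finite B1" "finite B2" using basis_finite[OF mb] assms by auto
  then show ?thesis
    using card_Int_Diff[of B1 B2] card_Int_Diff[of B2 B1] bases_card_diff[OF mb assms(2,3)]
    by (simp add: Int_commute)
qed

lemma basis_maximal:
  assumes mb: "matroid_bases E \<B>" and B: "B \<in> \<B>" and "indep_of \<B> (insert x B)"
  shows "x \<in> B"
proof -
  obtain B0 where "B0 \<in> \<B>" "insert x B \<subseteq> B0" using assms(3) unfolding indep_of_def by blast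
  then show ?thesis using bases_incomparable[OF mb B] by blast
qed

lemma indep_card_basis:
  assumes mb: "matroid_bases E \<B>" and B: "B \<in> \<B>"
    and I: "indep_of \<B> I" and card: "card I = card B"
  shows "I \<in> \<B>"
proof -
  obtain B0 where B0: "B0 \<in> \<B>" "I \<subseteq> B0" using I unfolding indep_of_def by blast
  have "card I = card B0" using card bases_card[OF mb B B0(1)] by simp
  then have "I = B0" using card_subset_eq[OF basis_finite[OF mb B0(1)] B0(2)] by simp
  then show ?thesis using B0 by simp
qed

section \<open>Coordinates and spans\<close>

lemma (in module) in_span_subset_iff_representation:
  assumes S: "independent S" and v: "v \<in> span S" and T: "T \<subseteq> S"
  shows "v \<in> span T \<longleftrightarrow> (\<forall>b\<in>S - T. representation S v b = 0)"
proof
  assume "v \<in> span T"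
  then have "representation S v = representation T v"
    using representation_extend[OF S _ T] by simp
  then show "\<forall>b\<in>S - T. representation S v b = 0"
    using representation_ne_zero[of T v] by auto
next
  assume zero: "\<forall>b\<in>S - T. representation S v b = 0"
  have "v = (\<Sum>b | representation S v b \<noteq> 0. representation S v b *s b)"
    using sum_nonzero_representation_eq[OF S v] by simp
  also have "\<dots> \<in> span T"
    using zero representation_ne_zero[of S v] by (intro span_sum span_scale span_base) auto
  finally show "v \<in> span T" .
qed

corollary (in module) in_span_remove_iff_representation:
  assumes "independent S" "v \<in> span S" "s \<in> S"
  shows "v \<in> span (S - {s}) \<longleftrightarrow> representation S v s = 0"
  using in_span_subset_iff_representation[OF assms(1,2), of "S - {s}"] assms(3) by auto

interpretation gf2: vector_space scale2
  by unfold_locales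
    (simp_all add: scale2_def fun_eq_iff distrib_left distrib_right
      del: add_bit_eq_xor mult_bit_eq_and)

section \<open>Exchanges in a binary matroid\<close>

context
  fixes E :: "'a set" and \<B> :: "'a set set" and f :: "'a \<Rightarrow> nat \<Rightarrow> bit"
  assumes mb: "matroid_bases E \<B>"
    and rep: "\<And>I. I \<subseteq> E \<Longrightarrow> indep_of \<B> I \<longleftrightarrow> inj_on f I \<and> gf2.independent (f ` I)"
begin

lemma basis_image_independent: "B \<in> \<B> \<Longrightarrow> inj_on f B \<and> gf2.independent (f ` B)"
  using rep[OF basis_subset[OF mb]] unfolding indep_of_def by blast

lemma basis_image_remove:
  assumes "B \<in> \<B>" "b \<in> B"
  shows "f ` (B - {b}) = f ` B - {f b}"
proof -
  have "inj_on f B" using basis_image_independent[OF assms(1)] by blast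
  then show ?thesis using inj_on_image_set_diff[of f B B "{b}"] assms(2) by simp
qed

lemma basis_element_not_in_span:
  assumes J: "J \<in> \<B>" and x: "x \<in> J"
  shows "f x \<notin> gf2.span (f ` (J - {x}))"
proof
  assume sp: "f x \<in> gf2.span (f ` (J - {x}))"
  then have "f x \<in> gf2.span (f ` J - {f x})" unfolding basis_image_remove[OF J x] .
  then have "gf2.dependent (f ` J)" unfolding gf2.dependent_def using x by blast
  then show False using basis_image_independent[OF J] by simp
qed

lemma indep_insert:
  assumes I: "indep_of \<B> I" and x: "x \<in> E" and sp: "f x \<notin> gf2.span (f ` I)"
  shows "indep_of \<B> (insert x I)"
proof -
  have IE: "I \<subseteq> E" using I basis_subset[OF mb] unfolding indep_of_def by blast
  then have "inj_on f I" "gf2.independent (f ` I)" using rep I by auto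
  moreover have "f x \<notin> f ` I" using sp gf2.span_base by blast
  ultimately have "inj_on f (insert x I)" "gf2.independent (f ` insert x I)"
    using gf2.independent_insertI[OF sp] by auto
  then show ?thesis using rep[of "insert x I"] IE x by simp
qed

lemma in_span_basis:
  assumes B: "B \<in> \<B>" and x: "x \<in> E"
  shows "f x \<in> gf2.span (f ` B)"
proof (rule ccontr)
  assume "f x \<notin> gf2.span (f ` B)"
  then have "indep_of \<B> (insert x B)"
    using indep_insert[OF _ x] B unfolding indep_of_def by blast
  then have "x \<in> B" using basis_maximal[OF mb B] by blast
  then show False using \<open>f x \<notin> gf2.span (f ` B)\<close> gf2.span_base by blast
qed

lemma exchange_iff_not_in_span:
  assumes B: "B \<in> \<B>" and x: "x \<in> E" "x \<notin> B" and b: "b \<in> B"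
  shows "insert x (B - {b}) \<in> \<B> \<longleftrightarrow> f x \<notin> gf2.span (f ` (B - {b}))"
proof
  assume "insert x (B - {b}) \<in> \<B>"
  from basis_element_not_in_span[OF this, of x] x(2)
  show "f x \<notin> gf2.span (f ` (B - {b}))" by (simp add: insert_Diff_if)
next
  assume "f x \<notin> gf2.span (f ` (B - {b}))"
  moreover have "indep_of \<B> (B - {b})" using B unfolding indep_of_def by blast
  ultimately have "indep_of \<B> (insert x (B - {b}))" using indep_insert x(1) by blast
  moreover have "card (insert x (B - {b})) = card B"
    using basis_finite[OF mb B] x(2) b card_Suc_Diff1[of B b] by simp
  ultimately show "insert x (B - {b}) \<in> \<B>" using indep_card_basis[OF mb B] by blast
qed

lemma exchange_iff_coordinate:
  assumes B: "B \<in> \<B>" and x: "x \<in> E" "x \<notin> B" and b: "b \<in> B"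
  shows "insert x (B - {b}) \<in> \<B> \<longleftrightarrow> gf2.representation (f ` B) (f x) (f b) \<noteq> 0"
proof -
  have "f x \<in> gf2.span (f ` (B - {b})) \<longleftrightarrow> gf2.representation (f ` B) (f x) (f b) = 0"
    unfolding basis_image_remove[OF B b]
    using gf2.in_span_remove_iff_representation basis_image_independent[OF B]
      in_span_basis[OF B x(1)] b by blast
  then show ?thesis using exchange_iff_not_in_span[OF assms] by blast
qed

lemma span_of_common_part:
  assumes B: "B \<in> \<B>" and v: "v \<in> gf2.span (f ` B)"
    and zero: "\<forall>b\<in>B - X. gf2.representation (f ` B) v (f b) = 0"
  shows "v \<in> gf2.span (f ` (B \<inter> X))"
proof -
  have "\<forall>c\<in>f ` B - f ` (B \<inter> X). gf2.representation (f ` B) v c = 0"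
    using zero by blast
  then show ?thesis
    using gf2.in_span_subset_iff_representation[OF _ v, of "f ` (B \<inter> X)"]
      basis_image_independent[OF B] by blast
qed

text \<open>Dual exchange: every \<open>x \<in> X - B\<close> can replace some \<open>b \<in> B - X\<close>.  (This holds in
  every matroid; here it is read off the coordinates of \<open>f x\<close>, which cannot all vanish
  on \<open>B - X\<close> because \<open>f x\<close> is not spanned by \<open>X - x\<close>.)\<close>
lemma dual_exchange:
  assumes B: "B \<in> \<B>" and X: "X \<in> \<B>" and x: "x \<in> X - B"
  shows "\<exists>b\<in>B - X. insert x (B - {b}) \<in> \<B>"
proof (rule ccontr)
  assume no_exchange: "\<not> ?thesis"
  have xE: "x \<in> E" using x basis_subset[OF mb X] by blast
  then have "\<forall>b\<in>B - X. gf2.representation (f ` B) (f x) (f b) = 0"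
    using no_exchange exchange_iff_coordinate[OF B xE] x by blast
  then have "f x \<in> gf2.span (f ` (B \<inter> X))"
    using span_of_common_part[OF B in_span_basis[OF B xE]] by blast
  moreover have "f ` (B \<inter> X) \<subseteq> f ` (X - {x})" using x by blast
  ultimately have "f x \<in> gf2.span (f ` (X - {x}))" using gf2.span_mono by blast
  then show False using basis_element_not_in_span[OF X] x by blast
qed

text \<open>Otherwise all coordinates of
  \<open>f x1\<close> and \<open>f x2\<close> on \<open>B - X\<close> equal 1, so \<open>f x1 + f x2\<close> is spanned by \<open>B \<inter> X\<close>,
  and \<open>f x1\<close> by \<open>X - x1\<close>.\<close>
lemma binary_obstruction:
  assumes B: "B \<in> \<B>" and X: "X \<in> \<B>" and two: "2 \<le> card (X - B)"
  shows "\<exists>x\<in>X - B. \<exists>b\<in>B - X. insert x (B - {b}) \<notin> \<B>"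
proof (rule ccontr)
  assume all_exchange: "\<not> ?thesis"
  have "finite (X - B)" using basis_finite[OF mb X] by simp
  then have "\<not> (\<forall>a\<in>X - B. \<forall>b\<in>X - B. a = b)" using card_le_Suc0_iff_eq two by fastforce
  then obtain x1 x2 where x12: "x1 \<in> X - B" "x2 \<in> X - B" "x1 \<noteq> x2" by blast
  define R where "R = gf2.representation (f ` B)"
  have indep: "gf2.independent (f ` B)" using basis_image_independent[OF B] by blast
  have one: "R (f x) (f b) = 1" if x: "x \<in> X - B" and b: "b \<in> B - X" for x b
  proof -
    have xE: "x \<in> E" using x basis_subset[OF mb X] by blast
    have "insert x (B - {b}) \<in> \<B>" using all_exchange x b by blast
    then show ?thesis using exchange_iff_coordinate[OF B xE _, of b] x b unfolding R_def by simp
  qed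
  have span: "f x1 \<in> gf2.span (f ` B)" "f x2 \<in> gf2.span (f ` B)"
    using in_span_basis[OF B] x12 basis_subset[OF mb X] by auto
  have "R (f x1 + f x2) = (\<lambda>c. R (f x1) c + R (f x2) c)"
    using gf2.representation_add[OF indep span(2,1)] unfolding R_def .
  then have "\<forall>b\<in>B - X. R (f x1 + f x2) (f b) = 0" using one x12(1,2) by simp
  then have "f x1 + f x2 \<in> gf2.span (f ` (B \<inter> X))"
    using span_of_common_part[OF B gf2.span_add[OF span]] unfolding R_def by blast
  moreover have "f ` (B \<inter> X) \<subseteq> f ` (X - {x1})" using x12 by blast
  ultimately have "f x1 + f x2 \<in> gf2.span (f ` (X - {x1}))" using gf2.span_mono by blast
  moreover have "f x2 \<in> gf2.span (f ` (X - {x1}))" using x12 by (intro gf2.span_base) blast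
  ultimately have "(f x1 + f x2) - f x2 \<in> gf2.span (f ` (X - {x1}))" by (rule gf2.span_diff)
  then show False using basis_element_not_in_span[OF X] x12 by simp
qed

end

section \<open>The combinatorial induction\<close>

text \<open>Closing step: if two neighbours \<open>B - b + x\<close> and \<open>B - b' + x'\<close> of \<open>B\<close> are bases of
  \<open>M1\<close> but \<open>B - b' + x\<close> is not, then exchanging \<open>x'\<close> from the second towards the first
  can only bring back \<open>b'\<close>, so \<open>B\<close> is a basis of \<open>M1\<close>.\<close>
lemma basis_from_two_neighbours:
  assumes mb1: "matroid_bases E \<B>1" and x': "x' \<notin> B" and b': "b' \<in> B"
    and N: "insert x (B - {b}) \<in> \<B>1" and N': "insert x' (B - {b'}) \<in> \<B>1"
    and not_basis: "insert x (B - {b'}) \<notin> \<B>1"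
  shows "B \<in> \<B>1"
proof -
  have "x' \<noteq> x" using N' not_basis by blast
  then have "x' \<in> insert x' (B - {b'}) - insert x (B - {b})" using x' by blast
  then obtain y where y: "y \<in> insert x (B - {b}) - insert x' (B - {b'})"
      and new: "insert y (insert x' (B - {b'}) - {x'}) \<in> \<B>1"
    using basis_exchange[OF mb1 N' N] by blast
  have rest: "insert x' (B - {b'}) - {x'} = B - {b'}" using x' by blast
  have "y = x \<or> y = b'" using y by blast
  moreover have "y \<noteq> x" using new not_basis unfolding rest by blast
  ultimately have "insert b' (B - {b'}) \<in> \<B>1" using new unfolding rest by blast
  then show ?thesis using b' by (simp add: insert_absorb)
qed

lemma bases_reached_from_neighbourhood:
  assumes mb: "matroid_bases E \<B>" and mb1: "matroid_bases E \<B>1" and sub: "\<B>1 \<subseteq> \<B>"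
    and X1: "X \<in> \<B>1" and adj: "\<forall>Y. base_adj \<B> X Y \<longrightarrow> Y \<in> \<B>1"
    and dual: "\<And>B x. B \<in> \<B> \<Longrightarrow> x \<in> X - B \<Longrightarrow> \<exists>b\<in>B - X. insert x (B - {b}) \<in> \<B>"
    and obstruction: "\<And>B. B \<in> \<B> \<Longrightarrow> 2 \<le> card (X - B) \<Longrightarrow>
      \<exists>x\<in>X - B. \<exists>b\<in>B - X. insert x (B - {b}) \<notin> \<B>"
  shows "B \<in> \<B> \<Longrightarrow> B \<in> \<B>1"
proof (induction "card (B - X)" arbitrary: B rule: less_induct)
  case (less B)
  have X: "X \<in> \<B>" using sub X1 by blast
  have fin: "finite B" "finite X" using basis_finite[OF mb] less(2) X by auto
  have sym: "card (X - B) = card (B - X)" using bases_card_diff[OF mb X less(2)] .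
  have closer: "insert y (B - {b}) \<in> \<B>1"
    if "y \<in> X" "b \<in> B - X" "insert y (B - {b}) \<in> \<B>" for y b
  proof (rule less(1)[OF _ that(3)])
    have "insert y (B - {b}) - X = (B - X) - {b}" using that(1) by blast
    then show "card (insert y (B - {b}) - X) < card (B - X)"
      using card_Diff1_less[of "B - X" b] that(2) fin by simp
  qed
  consider "card (B - X) = 0" | "card (B - X) = 1" | "2 \<le> card (B - X)" by linarith
  then show ?case
  proof cases
    case 1
    then have "B = X" using bases_incomparable[OF mb less(2) X] fin by auto
    then show ?thesis using X1 by simp
  next
    case 2
    have "card ((X - B) \<union> (B - X)) = card (X - B) + card (B - X)"
      using fin by (intro card_Un_disjoint) auto
    then have "card ((X - B) \<union> (B - X)) = 2" using 2 sym by simp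
    then show ?thesis using adj less(2) X unfolding base_adj_def by blast
  next
    case 3
    then obtain x b' where x: "x \<in> X - B" and b': "b' \<in> B - X"
        and not_basis: "insert x (B - {b'}) \<notin> \<B>"
      using obstruction[OF less(2)] sym by auto
    obtain b where b: "b \<in> B - X" "insert x (B - {b}) \<in> \<B>" using dual[OF less(2) x] by blast
    obtain x' where x': "x' \<in> X - B" "insert x' (B - {b'}) \<in> \<B>"
      using basis_exchange[OF mb less(2) X b'] by blast
    show ?thesis
      by (rule basis_from_two_neighbours[OF mb1, of x' B b' x b])
        (use x x' b b' not_basis sub closer in auto)
  qed
qed

theorem lemma3:
  fixes E :: "'a set" and \<B> \<B>1 :: "'a set set" and X :: "'a set"
  assumes "binary_matroid E \<B>"
    and "matroid_bases E \<B>1"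
    and "\<B>1 \<subseteq> \<B>"
    and "X \<in> \<B>1"
    and "\<forall>Y. base_adj \<B> X Y \<longrightarrow> Y \<in> \<B>1"
  shows "\<B>1 = \<B>"
proof -
  have mb: "matroid_bases E \<B>" using assms(1) unfolding binary_matroid_def by blast
  obtain f :: "'a \<Rightarrow> nat \<Rightarrow> bit" where
    rep: "\<And>I. I \<subseteq> E \<Longrightarrow> indep_of \<B> I \<longleftrightarrow> inj_on f I \<and> gf2.independent (f ` I)"
    using assms(1) unfolding binary_matroid_def by blast
  have X: "X \<in> \<B>" using assms(3,4) by blast
  have "B \<in> \<B>1" if "B \<in> \<B>" for B
  proof (rule bases_reached_from_neighbourhood[OF mb assms(2-5) _ _ that])
    show "\<exists>b\<in>B - X. insert x (B - {b}) \<in> \<B>" if "B \<in> \<B>" "x \<in> X - B" for B x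
      using dual_exchange[OF mb rep that(1) X that(2)] .
    show "\<exists>x\<in>X - B. \<exists>b\<in>B - X. insert x (B - {b}) \<notin> \<B>"
      if "B \<in> \<B>" "2 \<le> card (X - B)" for B
      using binary_obstruction[OF mb rep that(1) X that(2)] .
  qed
  then show ?thesis using assms(3) by blast
qed

end
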